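(* For every $(i,j)\in\mathcal I_1$ there exist integers $z_1,z_2$ and signs such that $$F_{ij}F_{<(i,j)}=\pm q^{z_1}F_{\le(i,j)},\qquad F_{>(i,j)}F_{ij}=\pm q^{z_2}F_{\ge(i,j)}.$$
   Context: Let $m,n\ge 1$, let $q$ be an indeterminate, and let indices range over $[1,m+n]$. Put $q_i=q$ if $i\le m$ and $q_i=q^{-1}$ if $i>m$. Let $\mathcal I_0=\{(i,j):1\le i<j\le m \text{ or } m+1\le i<j\le m+n\}$, $\mathcal I_1=\{(i,j):1\le i\le m<j\le m+n\}$. The quantum supergroup $U_q=U_q(\mathfrak{gl}(m|n))$ is the associative $\mathbb C(q)$-superalgebra generated by $K_j^{\pm1}$ ($j\in[1,m+n]$) and $E_{i,i+1},F_{i,i+1}$ ($1\le i<m+n$), where $K_j^{\pm1}$ and $E_{i,i+1},F_{i,i+1}$ for $i\ne m$ are even and $E_{m,m+1},F_{m,m+1}$ are odd, subject to: $K_iK_j=K_jK_i$, $K_iK_i^{-1}=1$; $K_iE_{j,j+1}K_i^{-1}=q_i^{\delta_{ij}-\delta_{i,j+1}}E_{j,j+1}$, $K_iF_{j,j+1}K_i^{-1}=q_i^{-(\delta_{ij}-\delta_{i,j+1})}F_{j,j+1}$; $[E_{i,i+1},F_{j,j+1}]=\delta_{ij}\frac{K_iK_{i+1}^{-1}-K_i^{-1}K_{i+1}}{q_i-q_i^{-1}}$; $E_{m,m+1}^2=F_{m,m+1}^2=0$; $E_{i,i+1}E_{j,j+1}=E_{j,j+1}E_{i,i+1}$ and $F_{i,i+1}F_{j,j+1}=F_{j,j+1}F_{i,i+1}$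 for $|i-j|>1$; for $|i-j|=1$, $i\neq m$, and $X\in\{E,F\}$: $X_{i,i+1}^2X_{j,j+1}-(q+q^{-1})X_{i,i+1}X_{j,j+1}X_{i,i+1}+X_{j,j+1}X_{i,i+1}^2=0$; and $[E_{m-1,m+2},E_{m,m+1}]=[F_{m-1,m+2},F_{m,m+1}]=0$. Here for homogeneous $x,y$, $[x,y]=xy-(-1)^{\bar x\bar y}yx$. For $i<j$ with $j>i+1$, $E_{ij}=E_{ic}E_{cj}-q_c^{-1}E_{cj}E_{ic}$ and $F_{ij}=-q_cF_{ic}F_{cj}+F_{cj}F_{ic}$ for $i<c<j$ (independent of $c$); $E_{ij},F_{ij}$ are odd iff $(i,j)\in\mathcal I_1$. Order on $\mathcal I_1$: $(i,j)\prec(s,t)$ iff $j>t$, or $j=t$ and $i<s$. For $I\subseteq\mathcal I_1$, $F_I$ is the product of the $F_{ij}$, $(i,j)\in I$, taken in increasing $\prec$-order ($F_\emptyset=1$). For $(i,j)\in\mathcal I_1$, $F_{\ge(i,j)}$, $F_{>(i,j)}$, $F_{\le(i,j)}$, $F_{<(i,j)}$ denote $F_I$ for $I=\{(s,t)\in\mathcal I_1:(s,t)\succeq(i,j)\}$, $\{(s,t):(s,t)\succ(i,j)\}$, $\{(s,t):(s,t)\preceq(i,j)\}$, $\{(s,t):(s,t)\prec(i,j)\}$ respectively. *)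

theory Defs
  imports Complex_Main "HOL-Computational_Algebra.Polynomial" "HOL-Computational_Algebra.Fraction_Field"
begin

text \<open>The coefficient field C(q) is the fraction field of complex polynomials;
  the indeterminate q is the polynomial X.\<close>

type_synonym Cq = "complex poly fract"

definition qq :: Cq where "qq = Fract [:0, 1:] 1"

definition qi :: "nat \<Rightarrow> nat \<Rightarrow> Cq" where
  "qi m i = (if i \<le> m then qq else inverse qq)"

text \<open>A C(q)-algebra structure on a ring 'a: a unital ring homomorphism
  from C(q) into the centre of 'a.\<close>
definition scalar_hom :: "(Cq \<Rightarrow> 'a::ring_1) \<Rightarrow> bool" where
  "scalar_hom \<phi> \<longleftrightarrow> \<phi> 1 = 1 \<and> (\<forall>a b. \<phi> (a + b) = \<phi> a + \<phi> b) \<and>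
     (\<forall>a b. \<phi> (a * b) = \<phi> a * \<phi> b) \<and> (\<forall>a x. \<phi> a * x = x * \<phi> a)"

text \<open>Root vectors: E i stands for E_{i,i+1}, F i for F_{i,i+1}.
  For j > i+1 we use the defining recursion with c = j-1
  (the paper states the result is independent of c).\<close>
fun Eroot :: "nat \<Rightarrow> (Cq \<Rightarrow> 'a::ring_1) \<Rightarrow> (nat \<Rightarrow> 'a) \<Rightarrow> nat \<Rightarrow> nat \<Rightarrow> 'a" where
  "Eroot m \<phi> E i j =
     (if j \<le> i + 1 then E i
      else Eroot m \<phi> E i (j - 1) * E (j - 1)
           - \<phi> (inverse (qi m (j - 1))) * E (j - 1) * Eroot m \<phi> E i (j - 1))"

fun Froot :: "nat \<Rightarrow> (Cq \<Rightarrow> 'a::ring_1) \<Rightarrow> (nat \<Rightarrow> 'a) \<Rightarrow> nat \<Rightarrow> nat \<Rightarrow> 'a" where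
  "Froot m \<phi> F i j =
     (if j \<le> i + 1 then F i
      else - (\<phi> (qi m (j - 1)) * Froot m \<phi> F i (j - 1) * F (j - 1))
           + F (j - 1) * Froot m \<phi> F i (j - 1))"

text \<open>Defining relations of U_q(gl(m|n)), with the super brackets written out
  (the only odd generators are E m, F m).\<close>
definition uq_rels :: "nat \<Rightarrow> nat \<Rightarrow> (Cq \<Rightarrow> 'a::ring_1) \<Rightarrow> (nat \<Rightarrow> 'a) \<Rightarrow> (nat \<Rightarrow> 'a)
     \<Rightarrow> (nat \<Rightarrow> 'a) \<Rightarrow> (nat \<Rightarrow> 'a) \<Rightarrow> bool" where
  "uq_rels m n \<phi> K Kinv E F \<longleftrightarrow>
     scalar_hom \<phi> \<and>
     \<comment> \<open>K's commute and are invertible\<close>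
     (\<forall>i\<in>{1..m+n}. \<forall>j\<in>{1..m+n}.
        K i * K j = K j * K i \<and> K i * Kinv j = Kinv j * K i \<and> Kinv i * Kinv j = Kinv j * Kinv i) \<and>
     (\<forall>i\<in>{1..m+n}. K i * Kinv i = 1) \<and>
     \<comment> \<open>K E K^-1, K F K^-1\<close>
     (\<forall>i\<in>{1..m+n}. \<forall>j\<in>{1..<m+n}.
        K i * E j * Kinv i =
          \<phi> (qi m i powi ((if i = j then 1 else 0) - (if i = j + 1 then 1 else 0))) * E j \<and>
        K i * F j * Kinv i =
          \<phi> (qi m i powi (- ((if i = j then 1 else 0) - (if i = j + 1 then 1 else 0)))) * F j) \<and>
     \<comment> \<open>[E_i, F_j]\<close>
     (\<forall>i\<in>{1..<m+n}. \<forall>j\<in>{1..<m+n}.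
        E i * F j - (if i = m \<and> j = m then -1 else 1) * (F j * E i) =
          (if i = j then (K i * Kinv (i + 1) - Kinv i * K (i + 1))
                         * \<phi> (inverse (qi m i - inverse (qi m i))) else 0)) \<and>
     E m * E m = 0 \<and> F m * F m = 0 \<and>
     (\<forall>i\<in>{1..<m+n}. \<forall>j\<in>{1..<m+n}. (i + 1 < j \<or> j + 1 < i) \<longrightarrow>
        E i * E j = E j * E i \<and> F i * F j = F j * F i) \<and>
     \<comment> \<open>Serre relations\<close>
     (\<forall>i\<in>{1..<m+n}. \<forall>j\<in>{1..<m+n}. (i = j + 1 \<or> j = i + 1) \<and> i \<noteq> m \<longrightarrow>
        E i * E i * E j - \<phi> (qq + inverse qq) * (E i * E j * E i) + E j * E i * E i = 0 \<and>
        F i * F i * F j - \<phi> (qq + inverse qq) * (F i * F j * F i) + F j * F i * F i = 0) \<and>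
     \<comment> \<open>[E_{m-1,m+2}, E_{m,m+1}] = 0 (both odd, so anticommutator), when indices exist\<close>
     (2 \<le> m \<and> 2 \<le> n \<longrightarrow>
        Eroot m \<phi> E (m - 1) (m + 2) * E m + E m * Eroot m \<phi> E (m - 1) (m + 2) = 0 \<and>
        Froot m \<phi> F (m - 1) (m + 2) * F m + F m * Froot m \<phi> F (m - 1) (m + 2) = 0)"

definition I1 :: "nat \<Rightarrow> nat \<Rightarrow> (nat \<times> nat) set" where
  "I1 m n = {(i, j). 1 \<le> i \<and> i \<le> m \<and> m < j \<and> j \<le> m + n}"

definition prec :: "nat \<times> nat \<Rightarrow> nat \<times> nat \<Rightarrow> bool" where
  "prec p r \<longleftrightarrow> snd p > snd r \<or> (snd p = snd r \<and> fst p < fst r)"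

definition I1_list :: "nat \<Rightarrow> nat \<Rightarrow> (nat \<times> nat) list" where
  "I1_list m n = concat (map (\<lambda>j. map (\<lambda>i. (i, j)) [1..<m+1]) (rev [m+1..<m+n+1]))"

definition FI :: "nat \<Rightarrow> nat \<Rightarrow> (Cq \<Rightarrow> 'a::ring_1) \<Rightarrow> (nat \<Rightarrow> 'a) \<Rightarrow> (nat \<times> nat) set \<Rightarrow> 'a" where
  "FI m n \<phi> F I = prod_list (map (\<lambda>(i, j). Froot m \<phi> F i j) (filter (\<lambda>p. p \<in> I) (I1_list m n)))"

end

theory Submission
  imports Defs
begin

text \<open>
  The idea: the odd root vectors F_{st} ((s,t) \<in> I_1) pairwise commute up to a factor
  \<plusminus>q^z, except for "crossing" pairs F_{ac}, F_{bd} (a < b, c < d), whose commutator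
  carries the correction term F_{ad} F_{bc}.  Moving F_{ij} through the ordered product
  column by column, each correction term meets an earlier factor F_{it} of the same
  column and dies, because F_{it}^2 = 0.
\<close>

definition central :: "'a::ring_1 \<Rightarrow> bool" where
  "central c \<longleftrightarrow> (\<forall>x. c * x = x * c)"

definition qcomm :: "'a::ring_1 \<Rightarrow> 'a \<Rightarrow> 'a \<Rightarrow> 'a" where
  "qcomm c x y = x * y - c * (y * x)"

definition serre :: "'a::ring_1 \<Rightarrow> 'a \<Rightarrow> 'a \<Rightarrow> 'a" where
  "serre c y x = y * (y * x) - c * (y * (x * y)) + x * (y * y)"

lemma central_commute: "central (c::'a::ring_1) \<Longrightarrow> x * c = c * x"
  by (simp add: central_def)

lemma central_left_commute:
  assumes "central c" shows "x * (c * y) = c * (x * y)"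
proof -
  have "x * (c * y) = (x * c) * y" by (simp only: mult.assoc)
  also have "\<dots> = c * (x * y)" using assms by (simp add: central_def mult.assoc)
  finally show ?thesis .
qed

lemma commute_left:
  fixes x y :: "'a::ring_1" assumes "x * y = y * x" shows "x * (y * w) = y * (x * w)"
  by (simp only: mult.assoc[symmetric] assms)

lemma square_zero_left:
  fixes x :: "'a::ring_1" assumes "x * x = 0" shows "x * (x * w) = 0"
  by (simp add: mult.assoc[symmetric] assms)

lemma qcomm_commute:
  fixes f A B c :: "'a::ring_1"
  assumes fA: "f * A = A * f" and fB: "f * B = B * f" and c: "central c"
  shows "f * qcomm c A B = qcomm c A B * f"
proof -
  note pull = central_left_commute[OF c] and push = central_commute[OF c]
  show ?thesis
    by (simp add: qcomm_def algebra_simps fA fB commute_left[OF fA] commute_left[OF fB]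
        pull[of f] pull[of A] pull[of B] push[of f])
qed

text \<open>If f commutes with A, bracketing with f on the left passes inside [Y,A]_p.
  This is what makes the definition of F_{ab} independent of the splitting index.\<close>
lemma qcomm_nested:
  fixes f A Y p r :: "'a::ring_1"
  assumes fA: "f * A = A * f" and p: "central p" and r: "central r"
  shows "qcomm r f (qcomm p Y A) = qcomm p (qcomm r f Y) A"
proof -
  note pullp = central_left_commute[OF p] and pushp = central_commute[OF p]
  note pullr = central_left_commute[OF r] and pushr = central_commute[OF r]
  show ?thesis
    by (simp add: qcomm_def algebra_simps fA[symmetric] commute_left[OF fA[symmetric]]
        pullp[of f] pullp[of A] pullp[of Y] pullr[of f] pullr[of A] pullr[of Y]
        pushp[of f] pushr[of f] pullr[of p])
qed

lemma qcomm_anticommute: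
  fixes f A Y p :: "'a::ring_1"
  assumes AY: "A * Y = - (Y * A)" and fY: "f * Y = Y * f" and p: "central p"
  shows "qcomm p A f * Y = - (Y * qcomm p A f)" and "qcomm p f A * Y = - (Y * qcomm p f A)"
proof -
  have AYw: "A * (Y * w) = - (Y * (A * w))" for w
    by (simp add: mult.assoc[symmetric] AY)
  note pull = central_left_commute[OF p] and push = central_commute[OF p]
  show "qcomm p A f * Y = - (Y * qcomm p A f)" "qcomm p f A * Y = - (Y * qcomm p f A)"
    by (simp_all add: qcomm_def algebra_simps AYw commute_left[OF fY] AY fY
        pull[of f] pull[of A] pull[of Y] push[of Y])
qed

lemma qcomm_square_zero:
  fixes B A c :: "'a::ring_1"
  assumes BB: "B * B = 0" and c: "central c"
  shows "B * qcomm c B A = - (c * (qcomm c B A * B))"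
    and "qcomm c A B * B = - (c * (B * qcomm c A B))"
proof -
  note pull = central_left_commute[OF c] and push = central_commute[OF c]
  show "B * qcomm c B A = - (c * (qcomm c B A * B))" "qcomm c A B * B = - (c * (B * qcomm c A B))"
    by (simp_all add: qcomm_def algebra_simps square_zero_left[OF BB] BB
        pull[of A] pull[of B] push[of B])
qed

lemma serre_qcomm:
  fixes c p F E W :: "'a::ring_1"
  assumes c: "central c" and p: "central p" and S: "serre c F E = 0" and FW: "F * W = W * F"
  shows "serre c F (qcomm p E W) = 0" and "serre c F (qcomm p W E) = 0"
proof -
  note pullc = central_left_commute[OF c] and pushc = central_commute[OF c]
  note pullp = central_left_commute[OF p] and pushp = central_commute[OF p]
  have "serre c F (qcomm p E W) = serre c F E * W - p * (W * serre c F E)"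
    and "serre c F (qcomm p W E) = W * serre c F E - p * (serre c F E * W)"
    by (simp_all add: serre_def qcomm_def algebra_simps FW commute_left[OF FW]
        pullc[of E] pullc[of F] pullc[of W] pushc[of E] pushc[of F] pushc[of W]
        pullp[of E] pullp[of F] pullp[of W] pushp[of E] pushp[of F] pushp[of W] pullp[of c])
  then show "serre c F (qcomm p E W) = 0" "serre c F (qcomm p W E) = 0"
    using S by simp_all
qed

lemma anticommute_sym: "x * y = - (y * x) \<Longrightarrow> y * x = - (x * (y::'a::ring_1))"
  by simp

text \<open>A pair p, p' = p^{-1} of central elements such that p + p' is not a zero divisor;
  in U_q these are q_k, q_k^{-1}.  Identities needing the inverse live here.\<close>
locale qpair =
  fixes p p' :: "'a::ring_1"
  assumes inverse_pair: "p * p' = 1" and central_p: "central p" and central_p': "central p'"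
    and sum_cancel: "(p + p') * x = 0 \<Longrightarrow> x = 0"
begin

lemma inverse_pair_left: "p * (p' * x) = x" "p' * (p * x) = x"
  using inverse_pair central_commute[OF central_p, of p'] by (simp_all add: mult.assoc[symmetric])

lemmas scalar_left_commute = central_left_commute[OF central_p] central_left_commute[OF central_p']
lemmas scalar_commute = central_commute[OF central_p] central_commute[OF central_p']

lemma qcomm_square_zero_serre:
  assumes EE: "E * E = 0" and S: "serre (p + p') F E = 0"
  shows "qcomm p F E * qcomm p F E = 0" and "qcomm p E F * qcomm p E F = 0"
proof -
  have "(p + p') * (qcomm p F E * qcomm p F E)
          = - (serre (p + p') F E * E) - p * (p * (E * serre (p + p') F E))"
    and "(p + p') * (qcomm p E F * qcomm p E F)
          = - (E * serre (p + p') F E) - p * (p * (serre (p + p') F E * E))"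
    by (simp_all add: serre_def qcomm_def algebra_simps square_zero_left[OF EE] EE inverse_pair_left
        scalar_left_commute[of E] scalar_left_commute[of F] scalar_commute[of E] scalar_commute[of F])
  then show "qcomm p F E * qcomm p F E = 0" "qcomm p E F * qcomm p E F = 0"
    using S sum_cancel by simp_all
qed

text \<open>If x, z commute and both satisfy the Serre relation with y, then y commutes
  with [z,[y,x]_p]_p; in U_q this gives [F_k, F_{k-1,k+2}] = 0 for even k.\<close>
lemma commute_double_qcomm:
  assumes xz: "x * z = z * x" and Sx: "serre (p + p') y x = 0" and Sz: "serre (p + p') y z = 0"
  shows "y * qcomm p z (qcomm p y x) = qcomm p z (qcomm p y x) * y"
proof -
  have "(p + p') * (y * qcomm p z (qcomm p y x) - qcomm p z (qcomm p y x) * y)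
     = - (serre (p + p') y z * x) + serre (p + p') y x * z - p * (p * (z * serre (p + p') y x))
       + p * (p * (x * serre (p + p') y z))
       - p * ((p + p') * (serre (p + p') y x * z)) + p * ((p + p') * (z * serre (p + p') y x))"
    by (simp add: serre_def qcomm_def algebra_simps xz commute_left[OF xz] inverse_pair_left
        scalar_left_commute[of x] scalar_left_commute[of y] scalar_left_commute[of z]
        scalar_commute[of x] scalar_commute[of y] scalar_commute[of z])
  then have "(p + p') * (y * qcomm p z (qcomm p y x) - qcomm p z (qcomm p y x) * y) = 0"
    using Sx Sz by simp
  then have "y * qcomm p z (qcomm p y x) - qcomm p z (qcomm p y x) * y = 0"
    by (rule sum_cancel)
  then show ?thesis by simp
qed

text \<open>Reordering [B,A]_p [C,B]_{p'} when B^2 = 0 and A, C commute; the source of the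
  crossing relation of odd root vectors.\<close>
lemma qcomm_product_swap:
  assumes BB: "B * B = 0" and AC: "A * C = C * A"
  shows "qcomm p B A * qcomm p' C B = - (qcomm p' C B * qcomm p B A)
     - p * (qcomm p (qcomm p' C B) A * B) - p' * (B * qcomm p (qcomm p' C B) A)"
  by (simp add: qcomm_def algebra_simps square_zero_left[OF BB] BB AC[symmetric]
      commute_left[OF AC[symmetric]] inverse_pair inverse_pair_left
      scalar_left_commute[of A] scalar_left_commute[of B] scalar_left_commute[of C]
      scalar_commute[of A] scalar_commute[of B] scalar_commute[of C])

end

definition signed_qpow :: "Cq \<Rightarrow> bool" where
  "signed_qpow c \<longleftrightarrow> (\<exists>s z. s \<in> {1, -1} \<and> c = s * qq powi z)"

lemma qq_nonzero: "qq \<noteq> 0"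
  by (simp add: qq_def Zero_fract_def eq_fract)

lemma qq_plus_inverse_nonzero: "qq + inverse qq \<noteq> 0"
proof -
  have "qq + inverse qq = Fract ([:0, 1:] * [:0, 1:] + 1) [:0, 1:]"
    by (simp add: qq_def)
  moreover have "[:0, 1:] * [:0, 1:] + 1 \<noteq> (0::complex poly)"
  proof
    assume "[:0, 1:] * [:0, 1:] + 1 = (0::complex poly)"
    then have "poly ([:0, 1:] * [:0, 1:] + 1) 0 = (0::complex)" by simp
    then show False by simp
  qed
  ultimately show ?thesis
    by (simp add: Zero_fract_def eq_fract)
qed

lemma signed_qpow_1: "signed_qpow 1"
  unfolding signed_qpow_def by (rule exI[of _ 1], rule exI[of _ 0]) simp

lemma signed_qpow_qq: "signed_qpow qq"
  unfolding signed_qpow_def by (rule exI[of _ 1], rule exI[of _ 1]) simp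

lemma signed_qpow_neg:
  assumes "signed_qpow c" shows "signed_qpow (- c)"
proof -
  obtain s z where s: "s \<in> {1, -1}" "c = s * qq powi z"
    using assms signed_qpow_def by blast
  then have "- s \<in> {1, -1}" "- c = (- s) * qq powi z"
    by auto
  then show ?thesis
    unfolding signed_qpow_def by blast
qed

lemma signed_qpow_mult:
  assumes "signed_qpow a" "signed_qpow b" shows "signed_qpow (a * b)"
proof -
  obtain s z where s: "s \<in> {1, -1}" "a = s * qq powi z"
    using assms(1) signed_qpow_def by blast
  obtain t w where t: "t \<in> {1, -1}" "b = t * qq powi w"
    using assms(2) signed_qpow_def by blast
  have "a * b = (s * t) * qq powi (z + w)"
    using s t qq_nonzero by (simp add: power_int_add algebra_simps)
  moreover have "s * t \<in> {1, -1}"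
    using s t by auto
  ultimately show ?thesis
    unfolding signed_qpow_def by blast
qed

lemma prod_list_concat: "prod_list (concat xss) = prod_list (map prod_list xss)"
  by (induction xss) simp_all

lemma prod_list_map_one: "prod_list (map (\<lambda>x. 1) xs) = (1::'a::monoid_mult)"
  by (induction xs) simp_all

lemma filter_upt_interval:
  "filter (\<lambda>s. a \<le> s \<and> s < b) [l..<u] = [max a l..<min b u]"
  by (induction u) (auto simp: max_def min_def le_Suc_eq)

locale uq_gl =
  fixes m n :: nat and \<phi> :: "Cq \<Rightarrow> 'a::ring_1" and K Kinv E F :: "nat \<Rightarrow> 'a"
  assumes m_pos: "1 \<le> m" and rels: "uq_rels m n \<phi> K Kinv E F"
begin

lemma phi_hom: "scalar_hom \<phi>"
  using rels unfolding uq_rels_def by (elim conjE)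

lemma phi_1: "\<phi> 1 = 1"
  and phi_add: "\<phi> (a + b) = \<phi> a + \<phi> b"
  and phi_mult: "\<phi> (a * b) = \<phi> a * \<phi> b"
  and central_phi: "central (\<phi> a)"
  using phi_hom unfolding scalar_hom_def central_def by blast+

lemma phi_neg: "\<phi> (- a) = - \<phi> a"
  using phi_add[of a "- a"] phi_add[of 0 0] by (simp add: eq_neg_iff_add_eq_0 add.commute)

lemma qsum_qi: "\<phi> (qi m k) + \<phi> (inverse (qi m k)) = \<phi> (qq + inverse qq)"
  by (simp add: qi_def phi_add add.commute)

text \<open>Every pair (q_k, q_k^{-1}) is a qpair, and q_k + q_k^{-1} = q + q^{-1} is the Serre
  coefficient, so the qpair identities apply to the root vectors.\<close>
lemma qpair_qi: "qpair (\<phi> (qi m k)) (\<phi> (inverse (qi m k)))"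
proof
  show "\<phi> (qi m k) * \<phi> (inverse (qi m k)) = 1"
    using qq_nonzero by (simp add: qi_def phi_mult[symmetric] phi_1)
  fix x assume "(\<phi> (qi m k) + \<phi> (inverse (qi m k))) * x = 0"
  then have "\<phi> (inverse (qq + inverse qq)) * (\<phi> (qq + inverse qq) * x) = 0"
    by (simp add: qsum_qi)
  then show "x = 0"
    using qq_plus_inverse_nonzero by (simp add: mult.assoc[symmetric] phi_mult[symmetric] phi_1)
qed (rule central_phi)+

lemmas qcomm_square_zero_serre_qi = qpair.qcomm_square_zero_serre[OF qpair_qi, unfolded qsum_qi]
lemmas commute_double_qcomm_qi = qpair.commute_double_qcomm[OF qpair_qi, unfolded qsum_qi]

abbreviation Fr :: "nat \<Rightarrow> nat \<Rightarrow> 'a" where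
  "Fr a b \<equiv> Froot m \<phi> F a b"

lemma F_commute:
  assumes "1 \<le> i" "i < m + n" "1 \<le> j" "j < m + n" "i + 1 < j \<or> j + 1 < i"
  shows "F i * F j = F j * F i"
proof -
  have "\<forall>i\<in>{1..<m+n}. \<forall>j\<in>{1..<m+n}. (i + 1 < j \<or> j + 1 < i) \<longrightarrow>
        E i * E j = E j * E i \<and> F i * F j = F j * F i"
    using rels unfolding uq_rels_def by (elim conjE)
  then show ?thesis using assms by auto
qed

lemma F_odd_square: "F m * F m = 0"
  using rels unfolding uq_rels_def by (elim conjE)

lemma serre_F:
  assumes "1 \<le> i" "i < m + n" "1 \<le> j" "j < m + n" "i = j + 1 \<or> j = i + 1" "i \<noteq> m"
  shows "serre (\<phi> (qq + inverse qq)) (F i) (F j) = 0"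
proof -
  have "\<forall>i\<in>{1..<m+n}. \<forall>j\<in>{1..<m+n}. (i = j + 1 \<or> j = i + 1) \<and> i \<noteq> m \<longrightarrow>
        E i * E i * E j - \<phi> (qq + inverse qq) * (E i * E j * E i) + E j * E i * E i = 0 \<and>
        F i * F i * F j - \<phi> (qq + inverse qq) * (F i * F j * F i) + F j * F i * F i = 0"
    using rels unfolding uq_rels_def by (elim conjE)
  then show ?thesis using assms by (auto simp: serre_def mult.assoc)
qed

lemma F_quartic:
  assumes "2 \<le> m" "2 \<le> n"
  shows "Fr (m - 1) (m + 2) * F m = - (F m * Fr (m - 1) (m + 2))"
proof -
  have "2 \<le> m \<and> 2 \<le> n \<longrightarrow>
        Eroot m \<phi> E (m - 1) (m + 2) * E m + E m * Eroot m \<phi> E (m - 1) (m + 2) = 0 \<and>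
        Fr (m - 1) (m + 2) * F m + F m * Fr (m - 1) (m + 2) = 0"
    using rels unfolding uq_rels_def by (elim conjE)
  then show ?thesis using assms by (simp add: eq_neg_iff_add_eq_0)
qed

lemma Fr_simple: "Fr a (Suc a) = F a"
  by (simp add: Froot.simps[of m \<phi> F a])

lemma Fr_step: "a < b \<Longrightarrow> Fr a (Suc b) = qcomm (\<phi> (qi m b)) (F b) (Fr a b)"
  by (simp add: Froot.simps[of m \<phi> F a "Suc b"] qcomm_def algebra_simps)

declare Froot.simps [simp del]

lemma Fr_commute_F:
  assumes "1 \<le> a" "a < b" "b \<le> m + n" "1 \<le> k" "k < m + n" "b + 1 \<le> k \<or> k + 2 \<le> a"
  shows "F k * Fr a b = Fr a b * F k"
  using assms
proof (induction b)
  case (Suc b)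
  show ?case
  proof (cases "b = a")
    case True
    have "F k * F a = F a * F k"
      using Suc.prems True by (intro F_commute) auto
    then show ?thesis using True by (simp add: Fr_simple)
  next
    case False
    then have "a < b" using Suc.prems by simp
    moreover have "F k * F b = F b * F k" "F k * Fr a b = Fr a b * F k"
      using Suc.prems \<open>a < b\<close> by (auto intro: F_commute Suc.IH)
    ultimately show ?thesis by (simp add: Fr_step qcomm_commute central_phi)
  qed
qed simp

lemma Fr_commute_Fr:
  assumes "1 \<le> a" "a < b" "b + 1 \<le> c" "c < d" "d \<le> m + n"
  shows "Fr a b * Fr c d = Fr c d * Fr a b"
  using assms
proof (induction d)
  case (Suc d)
  show ?case
  proof (cases "d = c")
    case True
    then show ?thesis using Suc.prems by (simp add: Fr_simple Fr_commute_F[symmetric])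
  next
    case False
    then have "c < d" using Suc.prems by simp
    moreover have "Fr a b * F d = F d * Fr a b" "Fr a b * Fr c d = Fr c d * Fr a b"
      using Suc.prems \<open>c < d\<close> by (auto intro: Fr_commute_F[symmetric] Suc.IH)
    ultimately show ?thesis by (simp add: Fr_step qcomm_commute central_phi)
  qed
qed simp

lemma Fr_split:
  assumes "1 \<le> a" "a < c" "c < b" "b \<le> m + n"
  shows "Fr a b = qcomm (\<phi> (qi m c)) (Fr c b) (Fr a c)"
  using assms
proof (induction b)
  case (Suc b)
  show ?case
  proof (cases "b = c")
    case True
    then show ?thesis using Suc.prems by (simp add: Fr_simple Fr_step)
  next
    case False
    then have cb: "c < b" using Suc.prems by simp
    have "F b * Fr a c = Fr a c * F b"
      using Suc.prems cb by (intro Fr_commute_F) auto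
    then have "qcomm (\<phi> (qi m b)) (F b) (qcomm (\<phi> (qi m c)) (Fr c b) (Fr a c))
             = qcomm (\<phi> (qi m c)) (Fr c (Suc b)) (Fr a c)"
      using cb by (simp add: qcomm_nested central_phi Fr_step)
    then show ?thesis using Suc.prems cb by (simp add: Fr_step Suc.IH)
  qed
qed simp

lemma serre_F_Fr_right:
  assumes "1 \<le> a" "a < k" "k < m + n" "k \<noteq> m"
  shows "serre (\<phi> (qq + inverse qq)) (F k) (Fr a k) = 0"
proof (cases "k = Suc a")
  case True
  then show ?thesis using assms by (simp add: Fr_simple serre_F)
next
  case False
  then have ak: "a < k - 1" using assms by simp
  have "serre (\<phi> (qq + inverse qq)) (F k) (F (k - 1)) = 0"
    using assms ak by (intro serre_F) auto
  moreover have "F k * Fr a (k - 1) = Fr a (k - 1) * F k"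
    using assms ak by (intro Fr_commute_F) auto
  ultimately show ?thesis
    using Fr_step[OF ak] ak by (simp add: serre_qcomm(1) central_phi)
qed

lemma serre_F_Fr_left:
  assumes "1 \<le> k" "k \<noteq> m" "k + 1 < b" "b \<le> m + n"
  shows "serre (\<phi> (qq + inverse qq)) (F k) (Fr (k + 1) b) = 0"
  using assms
proof (induction b)
  case (Suc b)
  show ?case
  proof (cases "b = k + 1")
    case True
    then show ?thesis using Suc.prems by (simp add: Fr_simple serre_F)
  next
    case False
    then have kb: "k + 1 < b" using Suc.prems by simp
    have "serre (\<phi> (qq + inverse qq)) (F k) (Fr (k + 1) b) = 0"
      using Suc.prems kb by (intro Suc.IH) auto
    moreover have "F k * F b = F b * F k"
      using Suc.prems kb by (intro F_commute) auto
    ultimately show ?thesis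
      using kb by (simp add: Fr_step serre_qcomm(2) central_phi)
  qed
qed simp

lemma Fr_square_zero_last_row:
  assumes "m < b" "b \<le> m + n"
  shows "Fr m b * Fr m b = 0"
  using assms
proof (induction b)
  case (Suc b)
  show ?case
  proof (cases "b = m")
    case True
    then show ?thesis by (simp add: Fr_simple F_odd_square)
  next
    case False
    then have mb: "m < b" using Suc.prems by simp
    have "Fr m b * Fr m b = 0"
      using Suc.prems mb by (intro Suc.IH) auto
    moreover have "serre (\<phi> (qq + inverse qq)) (F b) (Fr m b) = 0"
      using Suc.prems mb m_pos by (intro serre_F_Fr_right) auto
    ultimately show ?thesis
      using mb by (simp add: Fr_step qcomm_square_zero_serre_qi(1))
  qed
qed simp

lemma Fr_square_zero:
  assumes "1 \<le> a" "a \<le> m" "m < b" "b \<le> m + n"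
  shows "Fr a b * Fr a b = 0"
  using assms
proof (induction "m - a" arbitrary: a)
  case 0
  then show ?case using Fr_square_zero_last_row by simp
next
  case (Suc d)
  then have am: "a < m" by simp
  have "Fr (a + 1) b * Fr (a + 1) b = 0"
    using Suc am by (intro Suc.hyps) auto
  moreover have "serre (\<phi> (qq + inverse qq)) (F a) (Fr (a + 1) b) = 0"
    using Suc.prems am by (intro serre_F_Fr_left) auto
  moreover have "Fr a b = qcomm (\<phi> (qi m (a + 1))) (Fr (a + 1) b) (F a)"
    using Fr_split[of a "a + 1" b] Suc.prems am by (simp add: Fr_simple)
  ultimately show ?case by (simp add: qcomm_square_zero_serre_qi(2))
qed

lemma F_commute_Fr_length3:
  assumes "2 \<le> k" "k + 2 \<le> m + n" "k \<noteq> m"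
  shows "F k * Fr (k - 1) (k + 2) = Fr (k - 1) (k + 2) * F k"
proof -
  have "\<phi> (qi m (k + 1)) = \<phi> (qi m k)"
    using assms by (simp add: qi_def)
  then have Fr3: "Fr (k - 1) (k + 2)
      = qcomm (\<phi> (qi m k)) (F (k + 1)) (qcomm (\<phi> (qi m k)) (F k) (F (k - 1)))"
    using Fr_step[of "k - 1" k] Fr_step[of "k - 1" "k + 1"] Fr_simple[of "k - 1"] assms by simp
  have "F (k - 1) * F (k + 1) = F (k + 1) * F (k - 1)"
    using assms by (intro F_commute) auto
  moreover have "serre (\<phi> (qq + inverse qq)) (F k) (F (k - 1)) = 0"
    and "serre (\<phi> (qq + inverse qq)) (F k) (F (k + 1)) = 0"
    using assms by (auto intro: serre_F)
  ultimately show ?thesis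
    unfolding Fr3 by (rule commute_double_qcomm_qi)
qed

lemma F_commute_Fr_inner:
  assumes "k \<noteq> m" "1 \<le> a" "a < k" "k + 2 \<le> b" "b \<le> m + n"
  shows "F k * Fr a b = Fr a b * F k"
  using assms
proof (induction b)
  case (Suc b)
  show ?case
  proof (cases "Suc b = k + 2")
    case b: True
    show ?thesis
    proof (cases "a = k - 1")
      case True
      then show ?thesis using F_commute_Fr_length3[of k] Suc.prems b by simp
    next
      case False
      then have ak: "a < k - 1" using Suc.prems by simp
      have "F k * Fr (k - 1) (k + 2) = Fr (k - 1) (k + 2) * F k"
        using Suc.prems b ak by (intro F_commute_Fr_length3) auto
      moreover have "F k * Fr a (k - 1) = Fr a (k - 1) * F k"
        using Suc.prems b ak by (intro Fr_commute_F) auto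
      moreover have "Fr a (k + 2) = qcomm (\<phi> (qi m (k - 1))) (Fr (k - 1) (k + 2)) (Fr a (k - 1))"
        using Fr_split[of a "k - 1" "k + 2"] Suc.prems ak b by simp
      ultimately show ?thesis
        using b by (simp add: qcomm_commute central_phi)
    qed
  next
    case False
    then have kb: "k + 2 \<le> b" using Suc.prems by simp
    have "F k * F b = F b * F k" "F k * Fr a b = Fr a b * F k"
      using Suc.prems kb by (auto intro: F_commute Suc.IH)
    moreover have "a < b" using Suc.prems kb by simp
    ultimately show ?thesis by (simp add: Fr_step qcomm_commute central_phi)
  qed
qed simp

lemma anticommute_extend_right:
  assumes "1 \<le> b" "b < c" "a < c" "c < d" "d \<le> m + n"
    and base: "Fr b c * Fr a (c + 1) = - (Fr a (c + 1) * Fr b c)"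
  shows "Fr b c * Fr a d = - (Fr a d * Fr b c)"
  using assms(4,5)
proof (induction d)
  case (Suc d)
  show ?case
  proof (cases "d = c")
    case True
    then show ?thesis using base by simp
  next
    case False
    then have cd: "c < d" using Suc.prems by simp
    have "Fr b c * Fr a d = - (Fr a d * Fr b c)"
      using Suc.prems cd by (intro Suc.IH) auto
    then have "Fr a d * Fr b c = - (Fr b c * Fr a d)"
      by (rule anticommute_sym)
    moreover have "F d * Fr b c = Fr b c * F d"
      using Suc.prems cd assms(1,2) by (intro Fr_commute_F) auto
    ultimately have "Fr a (Suc d) * Fr b c = - (Fr b c * Fr a (Suc d))"
      using cd assms(3) by (simp add: Fr_step qcomm_anticommute(2) central_phi)
    then show ?thesis by (rule anticommute_sym)
  qed
qed simp

lemma anticommute_extend_left: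
  assumes "1 \<le> a" "a < b" "b < c" "c \<le> m + n" "b \<le> d" "d \<le> m + n"
    and base: "Fr b c * Fr (b - 1) d = - (Fr (b - 1) d * Fr b c)"
  shows "Fr b c * Fr a d = - (Fr a d * Fr b c)"
  using assms(1,2)
proof (induction "b - 1 - a" arbitrary: a)
  case 0
  then have "a = b - 1" by simp
  then show ?case using base by simp
next
  case (Suc k)
  then have ab: "a + 1 < b" by simp
  have "Fr b c * Fr (a + 1) d = - (Fr (a + 1) d * Fr b c)"
    using Suc ab by (intro Suc.hyps) auto
  then have "Fr (a + 1) d * Fr b c = - (Fr b c * Fr (a + 1) d)"
    by (rule anticommute_sym)
  moreover have "F a * Fr b c = Fr b c * F a"
    using Suc.prems ab assms(3,4) by (intro Fr_commute_F) auto
  moreover have "Fr a d = qcomm (\<phi> (qi m (a + 1))) (Fr (a + 1) d) (F a)"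
    using Fr_split[of a "a + 1" d] Suc.prems ab assms(5,6) by (simp add: Fr_simple)
  ultimately have "Fr a d * Fr b c = - (Fr b c * Fr a d)"
    by (simp add: qcomm_anticommute(1) central_phi)
  then show ?case by (rule anticommute_sym)
qed

lemma Fr_nested_anticommute:
  assumes "1 \<le> a" "a < b" "b \<le> m" "m < c" "c < d" "d \<le> m + n"
  shows "Fr b c * Fr a d = - (Fr a d * Fr b c)"
  using assms
proof (induction "c - b" arbitrary: a b c d rule: less_induct)
  case less
  have adjacent: "Fr b c * Fr (b - 1) (c + 1) = - (Fr (b - 1) (c + 1) * Fr b c)"
  proof -
    consider "b < m" | "b = m" "m + 1 < c" | "b = m" "c = m + 1"
      using less.prems by linarith
    then show ?thesis
    proof cases
      case 1
      have IH: "Fr (b + 1) c * Fr (b - 1) (c + 1) = - (Fr (b - 1) (c + 1) * Fr (b + 1) c)"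
        using less.prems 1 by (intro less.hyps) auto
      have "F b * Fr (b - 1) (c + 1) = Fr (b - 1) (c + 1) * F b"
        using less.prems 1 by (intro F_commute_Fr_inner) auto
      moreover have "Fr b c = qcomm (\<phi> (qi m (b + 1))) (Fr (b + 1) c) (F b)"
        using Fr_split[of b "b + 1" c] less.prems 1 by (simp add: Fr_simple)
      ultimately show ?thesis
        using qcomm_anticommute(1)[OF IH _ central_phi] by simp
    next
      case 2
      have IH: "Fr m (c - 1) * Fr (m - 1) (c + 1) = - (Fr (m - 1) (c + 1) * Fr m (c - 1))"
        using less.prems 2 by (intro less.hyps) auto
      have "F (c - 1) * Fr (m - 1) (c + 1) = Fr (m - 1) (c + 1) * F (c - 1)"
        using less.prems 2 by (intro F_commute_Fr_inner) auto
      moreover have "Fr m c = qcomm (\<phi> (qi m (c - 1))) (F (c - 1)) (Fr m (c - 1))"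
        using Fr_step[of m "c - 1"] 2 by simp
      ultimately show ?thesis
        using qcomm_anticommute(2)[OF IH _ central_phi] 2 by simp
    next
      case 3
      then have "2 \<le> m" "2 \<le> n"
        using less.prems by auto
      moreover have "Fr b c = F m" "b - 1 = m - 1" "c + 1 = m + 2"
        using 3 by (simp_all add: Fr_simple)
      ultimately show ?thesis
        using anticommute_sym[OF F_quartic] by simp
    qed
  qed
  have right: "Fr b c * Fr (b - 1) d = - (Fr (b - 1) d * Fr b c)"
    using less.prems by (intro anticommute_extend_right[OF _ _ _ _ _ adjacent]) auto
  then show ?case
    using less.prems by (intro anticommute_extend_left[OF _ _ _ _ _ _ right]) auto
qed

lemma qpair_q: "qpair (\<phi> qq) (\<phi> (inverse qq))"
  using qpair_qi[of 1] m_pos by (simp add: qi_def)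

lemma Fr_same_column:
  assumes "1 \<le> a" "a < b" "b \<le> m" "m < j" "j \<le> m + n"
  shows "Fr b j * Fr a j = - (\<phi> qq * (Fr a j * Fr b j))"
proof -
  have "Fr a j = qcomm (\<phi> qq) (Fr b j) (Fr a b)"
    using Fr_split[of a b j] assms by (simp add: qi_def)
  moreover have "Fr b j * Fr b j = 0"
    using assms by (intro Fr_square_zero) auto
  ultimately show ?thesis
    by (simp add: qcomm_square_zero(1) central_phi)
qed

lemma Fr_same_row:
  assumes "1 \<le> i" "i \<le> m" "m < j" "j < t" "t \<le> m + n"
  shows "Fr i j * Fr i t = - (\<phi> qq * (Fr i t * Fr i j))"
proof -
  have "Fr i t = qcomm (\<phi> (inverse qq)) (Fr j t) (Fr i j)"
    using Fr_split[of i j t] assms by (simp add: qi_def)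
  moreover have "Fr i j * Fr i j = 0"
    using assms by (intro Fr_square_zero) auto
  ultimately have "Fr i t * Fr i j = - (\<phi> (inverse qq) * (Fr i j * Fr i t))"
    by (simp add: qcomm_square_zero(2) central_phi)
  then show ?thesis
    by (simp add: qpair.inverse_pair_left[OF qpair_q])
qed

lemma Fr_crossing:
  assumes "1 \<le> a" "a < b" "b \<le> m" "m < c" "c < d" "d \<le> m + n"
  shows "Fr a c * Fr b d = - (Fr b d * Fr a c) + (\<phi> (inverse qq) - \<phi> qq) * (Fr a d * Fr b c)"
proof -
  have ac: "Fr a c = qcomm (\<phi> qq) (Fr b c) (Fr a b)"
    using Fr_split[of a b c] assms by (simp add: qi_def)
  have bd: "Fr b d = qcomm (\<phi> (inverse qq)) (Fr c d) (Fr b c)"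
    using Fr_split[of b c d] assms by (simp add: qi_def)
  have ad: "Fr a d = qcomm (\<phi> qq) (Fr b d) (Fr a b)"
    using Fr_split[of a b d] assms by (simp add: qi_def)
  have "Fr b c * Fr b c = 0"
    using assms by (intro Fr_square_zero) auto
  moreover have "Fr a b * Fr c d = Fr c d * Fr a b"
    using assms by (intro Fr_commute_Fr) auto
  ultimately have "Fr a c * Fr b d = - (Fr b d * Fr a c)
      - \<phi> qq * (Fr a d * Fr b c) - \<phi> (inverse qq) * (Fr b c * Fr a d)"
    unfolding ac bd ad by (rule qpair.qcomm_product_swap[OF qpair_q])
  moreover have "Fr b c * Fr a d = - (Fr a d * Fr b c)"
    using assms by (rule Fr_nested_anticommute)
  ultimately show ?thesis
    by (simp add: algebra_simps)
qed

definition qcommutes :: "'a \<Rightarrow> 'a \<Rightarrow> bool" where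
  "qcommutes x y \<longleftrightarrow> (\<exists>c. signed_qpow c \<and> x * y = \<phi> c * (y * x))"

lemma qcommutesI: "signed_qpow c \<Longrightarrow> x * y = \<phi> c * (y * x) \<Longrightarrow> qcommutes x y"
  unfolding qcommutes_def by blast

lemma qcommutes_qanti: "x * y = - (\<phi> qq * (y * x)) \<Longrightarrow> qcommutes x y"
  by (rule qcommutesI[of "- qq"]) (simp_all add: signed_qpow_neg signed_qpow_qq phi_neg)

lemma qcommutes_mult_right:
  assumes "qcommutes x y" "qcommutes x z" shows "qcommutes x (y * z)"
proof -
  obtain c where c: "signed_qpow c" "x * y = \<phi> c * (y * x)"
    using assms(1) qcommutes_def by blast
  obtain d where d: "signed_qpow d" "x * z = \<phi> d * (z * x)"
    using assms(2) qcommutes_def by blast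
  have "x * (y * z) = \<phi> c * (y * (x * z))"
    using c by (simp add: mult.assoc[symmetric])
  also have "\<dots> = \<phi> (c * d) * ((y * z) * x)"
    using d by (simp add: phi_mult mult.assoc central_left_commute[OF central_phi, of y])
  finally show ?thesis
    using signed_qpow_mult[OF c(1) d(1)] by (rule qcommutesI[rotated])
qed

lemma qcommutes_mult_left:
  assumes "qcommutes y x" "qcommutes z x" shows "qcommutes (y * z) x"
proof -
  obtain c where c: "signed_qpow c" "y * x = \<phi> c * (x * y)"
    using assms(1) qcommutes_def by blast
  obtain d where d: "signed_qpow d" "z * x = \<phi> d * (x * z)"
    using assms(2) qcommutes_def by blast
  have "(y * z) * x = \<phi> d * ((y * x) * z)"
    using d by (simp add: mult.assoc central_left_commute[OF central_phi, of y])
  also have "\<dots> = \<phi> (d * c) * (x * (y * z))"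
    using c by (simp add: phi_mult mult.assoc)
  finally show ?thesis
    using signed_qpow_mult[OF d(1) c(1)] by (rule qcommutesI[rotated])
qed

lemma qcommutes_prod_list_right:
  "(\<And>y. y \<in> set ys \<Longrightarrow> qcommutes x y) \<Longrightarrow> qcommutes x (prod_list ys)"
  by (induction ys) (auto intro: qcommutes_mult_right qcommutesI[OF signed_qpow_1] simp: phi_1)

lemma qcommutes_prod_list_left:
  "(\<And>y. y \<in> set ys \<Longrightarrow> qcommutes y x) \<Longrightarrow> qcommutes (prod_list ys) x"
  by (induction ys) (auto intro: qcommutes_mult_left qcommutesI[OF signed_qpow_1] simp: phi_1)

definition col_upto :: "nat \<Rightarrow> nat \<Rightarrow> 'a" where
  "col_upto t k = prod_list (map (\<lambda>s. Fr s t) [1..<Suc k])"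

definition col_from :: "nat \<Rightarrow> nat \<Rightarrow> 'a" where
  "col_from t k = prod_list (map (\<lambda>s. Fr s t) [k..<Suc m])"

lemma col_upto_0: "col_upto t 0 = 1"
  by (simp add: col_upto_def)

lemma col_upto_Suc: "col_upto t (Suc k) = col_upto t k * Fr (Suc k) t"
  by (simp add: col_upto_def)

lemma col_from_end: "col_from t (Suc m) = 1"
  by (simp add: col_from_def)

lemma col_from_Cons: "k \<le> m \<Longrightarrow> col_from t k = Fr k t * col_from t (Suc k)"
  by (simp add: col_from_def upt_conv_Cons del: upt_Suc)

text \<open>Since F_{it}^2 = 0 and the F_{st} of one column q-commute, a column segment
  containing F_{it} is annihilated by F_{it}.\<close>
lemma col_upto_absorb:
  assumes "1 \<le> i" "i \<le> k" "k \<le> m" "m < t" "t \<le> m + n"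
  shows "col_upto t k * Fr i t = 0"
  using assms
proof (induction k)
  case (Suc k)
  show ?case
  proof (cases "Suc k = i")
    case True
    have "Fr i t * Fr i t = 0"
      using Suc.prems by (intro Fr_square_zero) auto
    moreover have "col_upto t (Suc k) * Fr i t = col_upto t k * (Fr i t * Fr i t)"
      using col_upto_Suc[of t k] True by (simp add: mult.assoc)
    ultimately show ?thesis by simp
  next
    case False
    then have ik: "i \<le> k" using Suc.prems by simp
    have "Fr (Suc k) t * Fr i t = - (\<phi> qq * (Fr i t * Fr (Suc k) t))"
      using Suc.prems ik by (intro Fr_same_column) auto
    moreover have "col_upto t k * Fr i t = 0"
      using Suc.prems ik by (intro Suc.IH) auto
    ultimately show ?thesis
      by (simp add: col_upto_Suc mult.assoc central_left_commute[OF central_phi, of "col_upto t k"])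
        (simp add: mult.assoc[symmetric])
  qed
qed simp

lemma col_from_absorb:
  assumes "1 \<le> k" "k \<le> i" "i \<le> m" "m < t" "t \<le> m + n"
  shows "Fr i t * col_from t k = 0"
  using assms
proof (induction "i - k" arbitrary: k)
  case 0
  then have "k = i" by simp
  moreover have "Fr i t * Fr i t = 0"
    using 0 by (intro Fr_square_zero) auto
  ultimately show ?case
    using 0 by (simp add: col_from_Cons mult.assoc[symmetric])
next
  case (Suc d)
  then have ki: "k < i" by simp
  have "Fr i t * Fr k t = - (\<phi> qq * (Fr k t * Fr i t))"
    using Suc.prems ki by (intro Fr_same_column) auto
  moreover have "Fr i t * col_from t (Suc k) = 0"
    using Suc ki by (intro Suc.hyps) auto
  ultimately show ?case
    using Suc.prems ki by (simp add: col_from_Cons mult.assoc[symmetric]) (simp add: mult.assoc)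
qed

text \<open>Moving F_{ij} past F_{st} of a later column t > j, to the right of the
  segment F_{1t} \<cdots> F_{s-1,t}: the correction term of the crossing relation
  is killed by that segment.\<close>
lemma Fr_qcommute_after_col_upto:
  assumes "1 \<le> i" "i \<le> m" "m < j" "j < t" "t \<le> m + n" "k < m"
  shows "\<exists>e. signed_qpow e \<and>
    col_upto t k * (Fr i j * Fr (Suc k) t) = \<phi> e * (col_upto t k * (Fr (Suc k) t * Fr i j))"
proof -
  consider "Suc k < i" | "Suc k = i" | "i < Suc k" by linarith
  then show ?thesis
  proof cases
    case 1
    then have "Fr i j * Fr (Suc k) t = - (Fr (Suc k) t * Fr i j)"
      using assms by (intro Fr_nested_anticommute) auto
    then show ?thesis
      by (intro exI[of _ "- 1"]) (simp add: signed_qpow_neg signed_qpow_1 phi_neg phi_1)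
  next
    case 2
    then have "Fr i j * Fr (Suc k) t = - (\<phi> qq * (Fr (Suc k) t * Fr i j))"
      using assms by (simp add: Fr_same_row)
    then show ?thesis
      by (intro exI[of _ "- qq"])
        (simp add: signed_qpow_neg signed_qpow_qq phi_neg central_left_commute[OF central_phi])
  next
    case 3
    then have cross: "Fr i j * Fr (Suc k) t = - (Fr (Suc k) t * Fr i j)
        + (\<phi> (inverse qq) - \<phi> qq) * (Fr i t * Fr (Suc k) j)"
      using assms by (intro Fr_crossing) auto
    have "col_upto t k * (Fr i j * Fr (Suc k) t) = - (col_upto t k * (Fr (Suc k) t * Fr i j))
        + (\<phi> (inverse qq) - \<phi> qq) * ((col_upto t k * Fr i t) * Fr (Suc k) j)"
      by (simp add: cross algebra_simps central_left_commute[OF central_phi, of "col_upto t k"])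
    moreover have "col_upto t k * Fr i t = 0"
      using assms 3 by (intro col_upto_absorb) auto
    ultimately have "col_upto t k * (Fr i j * Fr (Suc k) t) = - (col_upto t k * (Fr (Suc k) t * Fr i j))"
      by simp
    then show ?thesis
      by (intro exI[of _ "- 1"]) (simp add: signed_qpow_neg signed_qpow_1 phi_neg phi_1)
  qed
qed

lemma Fr_qcommutes_col_upto:
  assumes "1 \<le> i" "i \<le> m" "m < j" "j < t" "t \<le> m + n" "k \<le> m"
  shows "qcommutes (Fr i j) (col_upto t k)"
  using assms(6)
proof (induction k)
  case 0
  show ?case
    by (rule qcommutesI[OF signed_qpow_1]) (simp add: col_upto_0 phi_1)
next
  case (Suc k)
  obtain c where c: "signed_qpow c" "Fr i j * col_upto t k = \<phi> c * (col_upto t k * Fr i j)"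
    using Suc qcommutes_def by auto
  obtain e where e: "signed_qpow e"
    "col_upto t k * (Fr i j * Fr (Suc k) t) = \<phi> e * (col_upto t k * (Fr (Suc k) t * Fr i j))"
    using Fr_qcommute_after_col_upto assms Suc.prems by (metis Suc_le_lessD)
  have "Fr i j * col_upto t (Suc k) = \<phi> c * (col_upto t k * (Fr i j * Fr (Suc k) t))"
    using c by (simp add: col_upto_Suc mult.assoc[symmetric])
  also have "\<dots> = \<phi> (c * e) * (col_upto t (Suc k) * Fr i j)"
    using e by (simp add: phi_mult col_upto_Suc mult.assoc)
  finally show ?case
    using signed_qpow_mult[OF c(1) e(1)] by (rule qcommutesI[rotated])
qed

lemma Fr_qcommute_before_col_from:
  assumes "1 \<le> i" "i \<le> m" "m < t" "t < j" "j \<le> m + n" "1 \<le> k" "k \<le> m"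
  shows "\<exists>e. signed_qpow e \<and>
    (Fr k t * Fr i j) * col_from t (Suc k) = \<phi> e * ((Fr i j * Fr k t) * col_from t (Suc k))"
proof -
  consider "i < k" | "k = i" | "k < i" by linarith
  then show ?thesis
  proof cases
    case 1
    then have "Fr k t * Fr i j = - (Fr i j * Fr k t)"
      using assms by (intro Fr_nested_anticommute) auto
    then show ?thesis
      by (intro exI[of _ "- 1"]) (simp add: signed_qpow_neg signed_qpow_1 phi_neg phi_1)
  next
    case 2
    then have "Fr k t * Fr i j = - (\<phi> qq * (Fr i j * Fr k t))"
      using assms by (simp add: Fr_same_row)
    then show ?thesis
      by (intro exI[of _ "- qq"]) (simp add: signed_qpow_neg signed_qpow_qq phi_neg mult.assoc)
  next
    case 3
    then have cross: "Fr k t * Fr i j = - (Fr i j * Fr k t)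
        + (\<phi> (inverse qq) - \<phi> qq) * (Fr k j * Fr i t)"
      using assms by (intro Fr_crossing) auto
    have "(Fr k t * Fr i j) * col_from t (Suc k) = - ((Fr i j * Fr k t) * col_from t (Suc k))
        + (\<phi> (inverse qq) - \<phi> qq) * (Fr k j * (Fr i t * col_from t (Suc k)))"
      by (simp add: cross algebra_simps)
    moreover have "Fr i t * col_from t (Suc k) = 0"
      using assms 3 by (intro col_from_absorb) auto
    ultimately have "(Fr k t * Fr i j) * col_from t (Suc k) = - ((Fr i j * Fr k t) * col_from t (Suc k))"
      by simp
    then show ?thesis
      by (intro exI[of _ "- 1"]) (simp add: signed_qpow_neg signed_qpow_1 phi_neg phi_1)
  qed
qed

lemma Fr_qcommutes_col_from:
  assumes "1 \<le> i" "i \<le> m" "m < t" "t < j" "j \<le> m + n" "1 \<le> k" "k \<le> Suc m"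
  shows "qcommutes (col_from t k) (Fr i j)"
  using assms(6,7)
proof (induction "Suc m - k" arbitrary: k)
  case 0
  then have "k = Suc m" by simp
  then show ?case
    by (intro qcommutesI[OF signed_qpow_1]) (simp add: col_from_end phi_1)
next
  case (Suc d)
  then have km: "k \<le> m" by simp
  have "qcommutes (col_from t (Suc k)) (Fr i j)"
    using Suc km by (intro Suc.hyps) auto
  then obtain c where c: "signed_qpow c"
    "col_from t (Suc k) * Fr i j = \<phi> c * (Fr i j * col_from t (Suc k))"
    using qcommutes_def by blast
  obtain e where e: "signed_qpow e"
    "(Fr k t * Fr i j) * col_from t (Suc k) = \<phi> e * ((Fr i j * Fr k t) * col_from t (Suc k))"
    using Fr_qcommute_before_col_from assms Suc.prems km by blast
  have "col_from t k * Fr i j = \<phi> c * ((Fr k t * Fr i j) * col_from t (Suc k))"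
    using c km by (simp add: col_from_Cons mult.assoc central_left_commute[OF central_phi, of "Fr k t"])
  also have "\<dots> = \<phi> (c * e) * (Fr i j * col_from t k)"
    using e km by (simp add: phi_mult col_from_Cons mult.assoc)
  finally show ?case
    using signed_qpow_mult[OF c(1) e(1)] by (rule qcommutesI[rotated])
qed

definition col_factor :: "(nat \<times> nat) set \<Rightarrow> nat \<Rightarrow> 'a" where
  "col_factor S t = prod_list (map (\<lambda>s. Fr s t) (filter (\<lambda>s. (s, t) \<in> S) [1..<m+1]))"

lemma FI_columns: "FI m n \<phi> F S = prod_list (map (col_factor S) (rev [m+1..<m+n+1]))"
  unfolding FI_def I1_list_def col_factor_def
  by (simp add: filter_concat map_concat prod_list_concat comp_def filter_map)

lemma col_factor_interval:
  assumes "1 \<le> a" "b \<le> Suc m"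
    and "\<And>s. 1 \<le> s \<Longrightarrow> s \<le> m \<Longrightarrow> (s, t) \<in> S \<longleftrightarrow> a \<le> s \<and> s < b"
  shows "col_factor S t = prod_list (map (\<lambda>s. Fr s t) [a..<b])"
proof -
  have "filter (\<lambda>s. (s, t) \<in> S) [1..<m+1] = filter (\<lambda>s. a \<le> s \<and> s < b) [1..<m+1]"
    using assms(3) by (intro filter_cong) auto
  also have "\<dots> = [a..<b]"
    using assms(1,2) by (simp add: filter_upt_interval max_def min_def del: upt_Suc)
  finally show ?thesis by (simp add: col_factor_def)
qed

lemma col_factor_empty:
  assumes "\<And>s. 1 \<le> s \<Longrightarrow> s \<le> m \<Longrightarrow> (s, t) \<notin> S"
  shows "col_factor S t = 1"
  using col_factor_interval[of 1 1 t S] assms by simp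

lemma FI_split:
  assumes "m < j" "j \<le> m + n"
  shows "FI m n \<phi> F S = prod_list (map (col_factor S) (rev [Suc j..<m+n+1]))
    * col_factor S j * prod_list (map (col_factor S) (rev [m+1..<j]))"
proof -
  have "[m+1..<m+n+1] = [m+1..<j] @ j # [Suc j..<m+n+1]"
    using assms upt_add_eq_append[of "m+1" j "m+n+1-j"] by (simp add: upt_conv_Cons del: upt_Suc)
  then show ?thesis by (simp add: FI_columns mult.assoc)
qed

lemma FI_later_columns:
  assumes "m < j" "j \<le> m + n" "1 \<le> a" "b \<le> Suc m"
    and "\<And>s t. 1 \<le> s \<Longrightarrow> s \<le> m \<Longrightarrow> m < t \<Longrightarrow> t \<le> m + n \<Longrightarrow>
           (s, t) \<in> S \<longleftrightarrow> j < t \<or> (t = j \<and> a \<le> s \<and> s < b)"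
  shows "FI m n \<phi> F S = prod_list (map (\<lambda>t. col_upto t m) (rev [Suc j..<m+n+1]))
    * prod_list (map (\<lambda>s. Fr s j) [a..<b])"
proof -
  have later: "map (col_factor S) (rev [Suc j..<m+n+1])
      = map (\<lambda>t. col_upto t m) (rev [Suc j..<m+n+1])"
    using assms(1,5) by (intro list.map_cong0)
      (auto simp: col_upto_def simp del: upt_Suc intro!: col_factor_interval)
  have earlier: "map (col_factor S) (rev [m+1..<j]) = map (\<lambda>t. 1) (rev [m+1..<j])"
    using assms(2,5) by (intro list.map_cong0) (auto intro!: col_factor_empty)
  have here: "col_factor S j = prod_list (map (\<lambda>s. Fr s j) [a..<b])"
    using assms by (intro col_factor_interval) auto
  show ?thesis
    unfolding FI_split[OF assms(1,2)] later here earlier by (simp add: prod_list_map_one del: upt_Suc)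
qed

lemma FI_earlier_columns:
  assumes "m < j" "j \<le> m + n" "1 \<le> a" "b \<le> Suc m"
    and "\<And>s t. 1 \<le> s \<Longrightarrow> s \<le> m \<Longrightarrow> m < t \<Longrightarrow> t \<le> m + n \<Longrightarrow>
           (s, t) \<in> S \<longleftrightarrow> t < j \<or> (t = j \<and> a \<le> s \<and> s < b)"
  shows "FI m n \<phi> F S = prod_list (map (\<lambda>s. Fr s j) [a..<b])
    * prod_list (map (\<lambda>t. col_from t 1) (rev [m+1..<j]))"
proof -
  have later: "map (col_factor S) (rev [Suc j..<m+n+1]) = map (\<lambda>t. 1) (rev [Suc j..<m+n+1])"
    using assms(1,5) by (intro list.map_cong0) (auto intro!: col_factor_empty)
  have earlier: "map (col_factor S) (rev [m+1..<j])
      = map (\<lambda>t. col_from t 1) (rev [m+1..<j])"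
    using assms(2,5) by (intro list.map_cong0)
      (auto simp: col_from_def simp del: upt_Suc intro!: col_factor_interval)
  have here: "col_factor S j = prod_list (map (\<lambda>s. Fr s j) [a..<b])"
    using assms by (intro col_factor_interval) auto
  show ?thesis
    unfolding FI_split[OF assms(1,2)] later here earlier by (simp add: prod_list_map_one del: upt_Suc)
qed

lemma Fr_times_FI_before:
  assumes "(i, j) \<in> I1 m n"
  shows "\<exists>c. signed_qpow c \<and> Fr i j * FI m n \<phi> F {p \<in> I1 m n. prec p (i, j)}
            = \<phi> c * FI m n \<phi> F {p \<in> I1 m n. prec p (i, j) \<or> p = (i, j)}"
proof -
  have ij: "1 \<le> i" "i \<le> m" "m < j" "j \<le> m + n"
    using assms by (auto simp: I1_def)
  define H where "H = prod_list (map (\<lambda>t. col_upto t m) (rev [Suc j..<m+n+1]))"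
  define C where "C = prod_list (map (\<lambda>s. Fr s j) [1..<i])"
  have before: "FI m n \<phi> F {p \<in> I1 m n. prec p (i, j)} = H * C"
    unfolding H_def C_def using ij by (intro FI_later_columns) (auto simp: I1_def prec_def)
  have "FI m n \<phi> F {p \<in> I1 m n. prec p (i, j) \<or> p = (i, j)}
      = H * prod_list (map (\<lambda>s. Fr s j) [1..<Suc i])"
    unfolding H_def using ij by (intro FI_later_columns) (auto simp: I1_def prec_def)
  then have after: "FI m n \<phi> F {p \<in> I1 m n. prec p (i, j) \<or> p = (i, j)} = H * C * Fr i j"
    using ij by (simp add: C_def mult.assoc)
  have "qcommutes (Fr i j) H"
    unfolding H_def using ij by (intro qcommutes_prod_list_right) (auto intro: Fr_qcommutes_col_upto)
  moreover have "qcommutes (Fr i j) C"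
    unfolding C_def
  proof (rule qcommutes_prod_list_right)
    fix y assume "y \<in> set (map (\<lambda>s. Fr s j) [1..<i])"
    then obtain s where "1 \<le> s" "s < i" "y = Fr s j" by auto
    then show "qcommutes (Fr i j) y"
      using ij by (auto intro!: qcommutes_qanti Fr_same_column)
  qed
  ultimately obtain c where "signed_qpow c" "Fr i j * (H * C) = \<phi> c * (H * C * Fr i j)"
    using qcommutes_mult_right qcommutes_def by blast
  then show ?thesis
    unfolding before after by blast
qed

lemma FI_after_times_Fr:
  assumes "(i, j) \<in> I1 m n"
  shows "\<exists>c. signed_qpow c \<and> FI m n \<phi> F {p \<in> I1 m n. prec (i, j) p} * Fr i j
            = \<phi> c * FI m n \<phi> F {p \<in> I1 m n. prec (i, j) p \<or> p = (i, j)}"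
proof -
  have ij: "1 \<le> i" "i \<le> m" "m < j" "j \<le> m + n"
    using assms by (auto simp: I1_def)
  define L where "L = prod_list (map (\<lambda>t. col_from t 1) (rev [m+1..<j]))"
  define C where "C = prod_list (map (\<lambda>s. Fr s j) [Suc i..<Suc m])"
  have before: "FI m n \<phi> F {p \<in> I1 m n. prec (i, j) p} = C * L"
    unfolding L_def C_def using ij by (intro FI_earlier_columns) (auto simp: I1_def prec_def)
  have "FI m n \<phi> F {p \<in> I1 m n. prec (i, j) p \<or> p = (i, j)}
      = prod_list (map (\<lambda>s. Fr s j) [i..<Suc m]) * L"
    unfolding L_def using ij by (intro FI_earlier_columns) (auto simp: I1_def prec_def)
  then have after: "FI m n \<phi> F {p \<in> I1 m n. prec (i, j) p \<or> p = (i, j)} = Fr i j * (C * L)"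
    using ij by (simp add: C_def upt_conv_Cons mult.assoc del: upt_Suc)
  have "qcommutes C (Fr i j)"
    unfolding C_def
  proof (rule qcommutes_prod_list_left)
    fix y assume "y \<in> set (map (\<lambda>s. Fr s j) [Suc i..<Suc m])"
    then obtain s where s: "s \<in> set [Suc i..<Suc m]" "y = Fr s j"
      by (auto simp del: upt_Suc)
    have "Fr s j * Fr i j = - (\<phi> qq * (Fr i j * Fr s j))"
      using s(1) ij by (intro Fr_same_column) (auto simp del: upt_Suc)
    then show "qcommutes y (Fr i j)"
      using s(2) by (simp add: qcommutes_qanti)
  qed
  moreover have "qcommutes L (Fr i j)"
    unfolding L_def using ij by (intro qcommutes_prod_list_left) (auto intro: Fr_qcommutes_col_from)
  ultimately obtain c where "signed_qpow c" "C * L * Fr i j = \<phi> c * (Fr i j * (C * L))"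
    using qcommutes_mult_left qcommutes_def by blast
  then show ?thesis
    unfolding before after by blast
qed

end

theorem proposition5p4:
  fixes \<phi> :: "Cq \<Rightarrow> 'a::ring_1" and K Kinv E F :: "nat \<Rightarrow> 'a" and m n i j :: nat
  assumes "1 \<le> m" and "1 \<le> n"
    and "uq_rels m n \<phi> K Kinv E F"
    and "(i, j) \<in> I1 m n"
  shows "(\<exists>(z1::int) (s1::Cq). s1 \<in> {1, -1} \<and>
            Froot m \<phi> F i j * FI m n \<phi> F {p \<in> I1 m n. prec p (i, j)}
              = \<phi> (s1 * qq powi z1) * FI m n \<phi> F {p \<in> I1 m n. prec p (i, j) \<or> p = (i, j)})
       \<and> (\<exists>(z2::int) (s2::Cq). s2 \<in> {1, -1} \<and>
            FI m n \<phi> F {p \<in> I1 m n. prec (i, j) p} * Froot m \<phi> F i j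
              = \<phi> (s2 * qq powi z2) * FI m n \<phi> F {p \<in> I1 m n. prec (i, j) p \<or> p = (i, j)})"
proof -
  interpret uq_gl m n \<phi> K Kinv E F
    using assms(1,3) by unfold_locales
  show ?thesis
    using Fr_times_FI_before[OF assms(4)] FI_after_times_Fr[OF assms(4)]
    unfolding signed_qpow_def by blast
qed

end
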